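(* Let $s\ge 1$ be an integer. The sum of the sizes of all $(s,s+1)$-cores equals $$\frac{s(s-1)}{12}\binom{2s}{s}.$$ Equivalently, since there are $C_s=\frac{1}{s+1}\binom{2s}{s}$ such cores, the average size of an $(s,s+1)$-core is $\frac{(2s+2)(s-1)s}{24}=\frac{1}{2}\binom{s+1}{3}$.
   Context: A partition $\lambda=(\lambda_1,\dots,\lambda_m)$ is a weakly decreasing sequence of positive integers. Its size is $\lambda_1+\dots+\lambda_m$. The hook length of a cell $B$ of the Young diagram is the number of cells directly to the right of $B$ in its row or directly below $B$ in its column, including $B$ itself. $\lambda$ is an $s$-core if no cell has hook length equal to $s$. An $(s,t)$-core is a partition that is both an $s$-core and a $t$-core. *)

theory Defs
  imports Complex_Main
begin

definition is_partition :: "nat list \<Rightarrow> bool" where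
  "is_partition la \<longleftrightarrow> sorted_wrt (\<ge>) la \<and> (\<forall>x\<in>set la. 0 < x)"

definition psize :: "nat list \<Rightarrow> nat" where
  "psize la = sum_list la"

definition cells :: "nat list \<Rightarrow> (nat \<times> nat) set" where
  "cells la = {(i, j). i < length la \<and> j < la ! i}"

definition hook :: "nat list \<Rightarrow> nat \<Rightarrow> nat \<Rightarrow> nat" where
  "hook la i j = (la ! i - Suc j) + card {k. i < k \<and> k < length la \<and> j < la ! k} + 1"

definition is_core :: "nat \<Rightarrow> nat list \<Rightarrow> bool" where
  "is_core s la \<longleftrightarrow> (\<forall>(i, j)\<in>cells la. hook la i j \<noteq> s)"

end

theory Submission
  imports Defs "HOL-Computational_Algebra.Formal_Power_Series"
begin

text \<open>
  A partition is determined by its beta-set, the set of hook lengths of its first column, and it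
  is a \<open>t\<close>-core exactly when its beta-set is closed under subtracting \<open>t\<close>. On the \<open>s\<close>-abacus a
  beta-set closed under subtracting \<open>s\<close> and \<open>s + 1\<close> has the beads \<open>0, \<dots>, a\<^sub>r - 1\<close> on runner
  \<open>r\<close>, where \<open>a\<^sub>0 = 0\<close> and \<open>a\<^sub>r\<^sub>+\<^sub>1 \<le> a\<^sub>r + 1\<close>. So the \<open>(s, s + 1)\<close>-cores correspond to
  the Catalan words of length \<open>s\<close>, and the size of the core of \<open>a\<close> is
  \<open>s \<Sum> (a\<^sub>r choose 2) + \<Sum> r a\<^sub>r - (\<Sum> a\<^sub>r choose 2)\<close>.
  The first-return decomposition of Catalan words turns the generating functions of these
  statistics into rational functions of the Catalan series \<open>C\<close>, and the total size is read off
  from the coefficients of \<open>C / (2 - C) = 1 / \<surd>(1 - 4x)\<close>.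
\<close>

section \<open>Beta-sets and hook lengths\<close>

text \<open>\<open>beta_num la i\<close> is the hook length of the first cell of row \<open>i\<close>.\<close>

definition beta_num :: "nat list \<Rightarrow> nat \<Rightarrow> nat" where
  "beta_num la i = la ! i + (length la - Suc i)"

definition beta_set :: "nat list \<Rightarrow> nat set" where
  "beta_set la = beta_num la ` {..<length la}"

definition sub_closed :: "nat \<Rightarrow> nat set \<Rightarrow> bool" where
  "sub_closed t H \<longleftrightarrow> (\<forall>b\<in>H. t \<le> b \<longrightarrow> b - t \<in> H)"

lemma partition_nth_antimono:
  assumes "is_partition la" "i \<le> k" "k < length la"
  shows "la ! k \<le> la ! i"
  using assms sorted_wrt_nth_less[of "(\<ge>)" la i k] unfolding is_partition_def
  by (cases "i = k") auto

lemma partition_nth_pos: "is_partition la \<Longrightarrow> k < length la \<Longrightarrow> 0 < la ! k"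
  unfolding is_partition_def by auto

lemma beta_num_decreasing:
  "is_partition la \<Longrightarrow> i \<le> k \<Longrightarrow> k < length la \<Longrightarrow> beta_num la k + (k - i) \<le> beta_num la i"
  using partition_nth_antimono[of la i k] unfolding beta_num_def by arith

lemma beta_num_lower_bound: "is_partition la \<Longrightarrow> k < length la \<Longrightarrow> length la - k \<le> beta_num la k"
  using partition_nth_pos[of la k] unfolding beta_num_def by arith

lemma obtain_last_index:
  assumes "P i" "i < m"
  obtains k where "i \<le> k" "k < m" "P k" "Suc k < m \<Longrightarrow> \<not> P (Suc k)"
proof -
  define k where "k = Max {k. k < m \<and> P k}"
  have fin: "finite {k. k < m \<and> P k}"
    by simp
  have "k \<in> {k. k < m \<and> P k}"
    unfolding k_def using assms by (intro Max_in fin) auto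
  moreover have "\<And>k'. k' < m \<Longrightarrow> P k' \<Longrightarrow> k' \<le> k"
    unfolding k_def using fin by simp
  ultimately show thesis
    using assms by (intro that[of k]) force+
qed

lemma hook_eq_last_row:
  assumes P: "is_partition la" and "i \<le> k" "k < length la" "j < la ! k"
    and below: "Suc k < length la \<Longrightarrow> la ! Suc k \<le> j"
  shows "hook la i j = la ! i - j + (k - i)"
proof -
  have "{k'. i < k' \<and> k' < length la \<and> j < la ! k'} = {i<..k}"
  proof (intro set_eqI iffI)
    fix k' assume "k' \<in> {k'. i < k' \<and> k' < length la \<and> j < la ! k'}"
    moreover have "la ! k' \<le> j" if "k < k'" "k' < length la"
      using partition_nth_antimono[OF P, of "Suc k" k'] below that by simp
    ultimately show "k' \<in> {i<..k}"
      by (auto simp: not_le[symmetric])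
  next
    fix k' assume "k' \<in> {i<..k}"
    then show "k' \<in> {k'. i < k' \<and> k' < length la \<and> j < la ! k'}"
      using partition_nth_antimono[OF P, of k' k] assms(3,4) by auto
  qed
  then show ?thesis
    unfolding hook_def using partition_nth_antimono[OF P, of i k] assms(2-4) by simp
qed

text \<open>The hook lengths in row \<open>i\<close> are exactly the differences \<open>beta_num la i - c\<close> for the gaps
  \<open>c < beta_num la i\<close> of the beta-set.\<close>

lemma hook_gives_gap:
  assumes P: "is_partition la" and i: "i < length la" and j: "j < la ! i"
  shows "0 < hook la i j \<and> hook la i j \<le> beta_num la i \<and> beta_num la i - hook la i j \<notin> beta_set la"
proof -
  define m where "m = length la"
  obtain k where k: "i \<le> k" "k < m" "j < la ! k" and below: "Suc k < m \<Longrightarrow> la ! Suc k \<le> j"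
    using obtain_last_index[of "\<lambda>k. j < la ! k" i m] i j unfolding m_def by (metis not_less)
  have hook: "hook la i j = la ! i - j + (k - i)"
    using hook_eq_last_row[OF P k(1) _ k(3) below] k(2) unfolding m_def by simp
  have "j + (m - Suc k) \<noteq> beta_num la r" if r: "r < m" for r
  proof (cases "r \<le> k")
    case True
    then show ?thesis
      using partition_nth_antimono[OF P True] k r unfolding beta_num_def m_def by simp
  next
    case False
    then show ?thesis
      using partition_nth_antimono[OF P, of "Suc k" r] below r unfolding beta_num_def m_def by simp
  qed
  then have "j + (m - Suc k) \<notin> beta_set la"
    unfolding beta_set_def m_def by auto
  moreover have "beta_num la i - hook la i j = j + (m - Suc k)"
    using hook k partition_nth_antimono[OF P k(1)] unfolding beta_num_def m_def by simp
  ultimately show ?thesis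
    using hook k partition_nth_antimono[OF P k(1)] unfolding beta_num_def m_def by auto
qed

lemma gap_gives_hook:
  assumes P: "is_partition la" and i: "i < length la"
    and h: "0 < h" "h \<le> beta_num la i" and gap: "beta_num la i - h \<notin> beta_set la"
  shows "\<exists>j < la ! i. hook la i j = h"
proof -
  define m where "m = length la"
  define c where "c = beta_num la i - h"
  obtain k where k: "i \<le> k" "k < m" "c < beta_num la k"
    and below: "Suc k < m \<Longrightarrow> \<not> c < beta_num la (Suc k)"
    using obtain_last_index[of "\<lambda>k. c < beta_num la k" i m] h i unfolding c_def m_def by auto
  have succ_below: "beta_num la (Suc k) < c" if "Suc k < m"
    using below[OF that] gap that unfolding c_def beta_set_def m_def by (auto simp: le_less)
  have c_ge: "m - Suc k \<le> c"
    using succ_below beta_num_lower_bound[OF P, of "Suc k"] unfolding m_def by (cases "Suc k < length la") auto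
  define j where "j = c - (m - Suc k)"
  have j_k: "j < la ! k"
    using k(3) c_ge unfolding j_def beta_num_def m_def by simp
  moreover have "la ! Suc k \<le> j" if "Suc k < m"
    using succ_below[OF that] that unfolding j_def beta_num_def m_def by simp
  ultimately have "hook la i j = la ! i - j + (k - i)"
    using hook_eq_last_row[OF P k(1)] k(2) unfolding m_def by simp
  moreover have "la ! i - j + (k - i) = h"
    using h k c_ge j_k partition_nth_antimono[OF P k(1)] unfolding j_def c_def beta_num_def m_def by simp
  moreover have "j < la ! i"
    using j_k partition_nth_antimono[OF P k(1)] k(2) unfolding m_def by simp
  ultimately show ?thesis
    by blast
qed

lemma is_core_iff_sub_closed:
  assumes P: "is_partition la" and t: "0 < t"
  shows "is_core t la \<longleftrightarrow> sub_closed t (beta_set la)"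
proof -
  have "is_core t la \<longleftrightarrow> (\<forall>i < length la. \<not> (\<exists>j < la ! i. hook la i j = t))"
    unfolding is_core_def cells_def by auto
  also have "\<dots> \<longleftrightarrow> (\<forall>i < length la. t \<le> beta_num la i \<longrightarrow> beta_num la i - t \<in> beta_set la)"
    using hook_gives_gap[OF P] gap_gives_hook[OF P _ t] by metis
  also have "\<dots> \<longleftrightarrow> sub_closed t (beta_set la)"
    unfolding sub_closed_def beta_set_def by auto
  finally show ?thesis .
qed

lemma beta_num_strict_decreasing:
  "is_partition la \<Longrightarrow> i < k \<Longrightarrow> k < length la \<Longrightarrow> beta_num la k < beta_num la i"
  using beta_num_decreasing[of la i k] by simp

lemma sorted_beta_nums: "is_partition la \<Longrightarrow> sorted_wrt (>) (map (beta_num la) [0..<length la])"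
  by (simp add: sorted_wrt_iff_nth_less beta_num_strict_decreasing)

lemma inj_on_beta_num: "is_partition la \<Longrightarrow> inj_on (beta_num la) {..<length la}"
  by (rule inj_onI) (metis beta_num_strict_decreasing lessThan_iff less_irrefl nat_neq_iff)

lemma card_beta_set: "is_partition la \<Longrightarrow> card (beta_set la) = length la"
  unfolding beta_set_def by (simp add: card_image inj_on_beta_num)

lemma sum_lessThan_eq_choose_two: "(\<Sum>i<m. i) = m choose 2"
  by (induction m) (simp_all add: numeral_2_eq_2)

lemma sum_beta_set: "is_partition la \<Longrightarrow> \<Sum>(beta_set la) = psize la + (length la choose 2)"
proof -
  assume P: "is_partition la"
  let ?m = "length la"
  have "\<Sum>(beta_set la) = (\<Sum>i<?m. beta_num la i)"
    unfolding beta_set_def by (simp add: sum.reindex inj_on_beta_num[OF P])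
  also have "\<dots> = (\<Sum>i<?m. la ! i) + (\<Sum>i<?m. ?m - Suc i)"
    unfolding beta_num_def by (rule sum.distrib)
  also have "(\<Sum>i<?m. ?m - Suc i) = (\<Sum>i<?m. i)"
    using sum.nat_diff_reindex[of id ?m] by simp
  finally show ?thesis
    by (simp add: psize_def sum_list_sum_nth atLeast0LessThan sum_lessThan_eq_choose_two)
qed

lemma psize_eq_beta_set:
  assumes "is_partition la"
  shows "real (psize la) = real (\<Sum>(beta_set la)) - real (card (beta_set la) choose 2)"
  using sum_beta_set[OF assms] card_beta_set[OF assms] by simp

lemma inj_on_beta_set: "inj_on beta_set {la. is_partition la}"
proof (rule inj_onI)
  fix la mu assume "la \<in> {la. is_partition la}" "mu \<in> {la. is_partition la}" "beta_set la = beta_set mu"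
  then have "rev (map (beta_num la) [0..<length la]) = rev (map (beta_num mu) [0..<length mu])"
    by (intro strict_sorted_equal) (auto simp: sorted_beta_nums sorted_wrt_rev beta_set_def atLeast0LessThan)
  then have eq: "map (beta_num la) [0..<length la] = map (beta_num mu) [0..<length mu]"
    by simp
  have len: "length la = length mu"
    using arg_cong[OF eq, of length] by (simp only: length_map length_upt diff_zero)
  have "beta_num la i = beta_num mu i" if "i < length la" for i
    using arg_cong[OF eq, of "\<lambda>xs. xs ! i"] that len by simp
  then have "la ! i = mu ! i" if "i < length la" for i
    using that len unfolding beta_num_def by fastforce
  with len show "la = mu"
    by (rule nth_equalityI)
qed

lemma sorted_greater_nth_gap:
  fixes xs :: "nat list"
  assumes "sorted_wrt (>) xs" "i \<le> k" "k < length xs"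
  shows "xs ! k + (k - i) \<le> xs ! i"
  using assms(2,3)
proof (induction k)
  case (Suc k)
  show ?case
  proof (cases "i = Suc k")
    case False
    then have "xs ! k + (k - i) \<le> xs ! i"
      using Suc by simp
    moreover have "xs ! Suc k < xs ! k"
      using sorted_wrt_nth_less[OF assms(1), of k "Suc k"] Suc.prems by simp
    ultimately show ?thesis
      using False Suc.prems by simp
  qed simp
qed simp

lemma beta_set_surj:
  assumes fin: "finite H" and H0: "0 \<notin> H"
  obtains la where "is_partition la" "beta_set la = H"
proof -
  define L where "L = rev (sorted_list_of_set H)"
  define m where "m = length L"
  have sorted: "sorted_wrt (>) L" and set_L: "set L = H"
    unfolding L_def using fin by (simp_all add: sorted_wrt_rev)
  have lower: "m - i \<le> L ! i" if "i < m" for i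
  proof -
    have "L ! (m - 1) \<in> H"
      using nth_mem[of "m - 1" L] that set_L unfolding m_def by simp
    then have "0 < L ! (m - 1)"
      using H0 by (metis gr0I)
    moreover have "L ! (m - 1) + (m - 1 - i) \<le> L ! i"
      using sorted_greater_nth_gap[OF sorted, of i "m - 1"] that unfolding m_def by simp
    ultimately show ?thesis
      by linarith
  qed
  define la where "la = map (\<lambda>i. L ! i - (m - Suc i)) [0..<m]"
  have len: "length la = m" and nth: "\<And>i. i < m \<Longrightarrow> la ! i = L ! i - (m - Suc i)"
    unfolding la_def by simp_all
  have beta: "beta_num la i = L ! i" if "i < m" for i
    using lower[OF that] that unfolding beta_num_def len nth[OF that] by simp
  have "la ! k \<le> la ! i" if "i < k" "k < m" for i k
    using sorted_greater_nth_gap[OF sorted, of i k] lower[of k] that nth[of i] nth[of k]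
    unfolding m_def by simp
  then have "sorted_wrt (\<ge>) la"
    unfolding sorted_wrt_iff_nth_less len by blast
  moreover have "0 < la ! i" if "i < m" for i
    using lower[OF that] nth[OF that] that by simp
  then have "\<forall>x\<in>set la. 0 < x"
    by (auto simp: in_set_conv_nth len)
  moreover have "beta_set la = H"
    unfolding beta_set_def len set_L[symmetric] using beta by (auto simp: in_set_conv_nth m_def)
  ultimately show thesis
    using that is_partition_def by blast
qed

lemma bij_betw_beta_set: "bij_betw beta_set {la. is_partition la} {H. finite H \<and> 0 \<notin> H}"
proof -
  have "0 \<notin> beta_set la" if "is_partition la" for la
    using beta_num_lower_bound[OF that] unfolding beta_set_def by fastforce
  moreover have "H \<in> beta_set ` {la. is_partition la}" if "finite H" "0 \<notin> H" for H
    using beta_set_surj[OF that] by (metis mem_Collect_eq image_eqI)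
  ultimately show ?thesis
    unfolding bij_betw_def using inj_on_beta_set by (auto simp: beta_set_def)
qed

lemma bij_betw_restrict_preimage:
  assumes "bij_betw f A B"
  shows "bij_betw f {x \<in> A. P (f x)} {y \<in> B. P y}"
  unfolding bij_betw_def
proof (intro conjI set_eqI iffI)
  show "inj_on f {x \<in> A. P (f x)}"
    using assms unfolding bij_betw_def by (rule inj_on_subset[OF conjunct1]) blast
next
  fix y assume "y \<in> {y \<in> B. P y}"
  then obtain x where "x \<in> A" "y = f x" "P y"
    using assms unfolding bij_betw_def by blast
  then show "y \<in> f ` {x \<in> A. P (f x)}"
    by blast
qed (use assms in \<open>auto simp: bij_betw_def\<close>)

lemma bij_betw_beta_set_cores:
  assumes "0 < s"
  shows "bij_betw beta_set {la. is_partition la \<and> is_core s la \<and> is_core (s + 1) la}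
    {H. finite H \<and> 0 \<notin> H \<and> sub_closed s H \<and> sub_closed (Suc s) H}"
proof -
  have "{la. is_partition la \<and> is_core s la \<and> is_core (s + 1) la}
      = {la \<in> {la. is_partition la}. sub_closed s (beta_set la) \<and> sub_closed (Suc s) (beta_set la)}"
    using is_core_iff_sub_closed[OF _ assms] is_core_iff_sub_closed[of _ "Suc s"] by auto
  moreover have "{H. finite H \<and> 0 \<notin> H \<and> sub_closed s H \<and> sub_closed (Suc s) H}
      = {H \<in> {H. finite H \<and> 0 \<notin> H}. sub_closed s H \<and> sub_closed (Suc s) H}"
    by auto
  ultimately show ?thesis
    using bij_betw_restrict_preimage[OF bij_betw_beta_set] by simp
qed

section \<open>Catalan words\<close>

definition catalan_word :: "nat list \<Rightarrow> bool" where
  "catalan_word a \<longleftrightarrow> (a = [] \<or> hd a = 0) \<and> successively (\<lambda>x y. y \<le> Suc x) a"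

definition catalan_words :: "nat \<Rightarrow> nat list set" where
  "catalan_words n = {a. length a = n \<and> catalan_word a}"

text \<open>\<open>word_join\<close> inverts the first-return decomposition of nonempty Catalan words.\<close>

definition word_join :: "nat list \<Rightarrow> nat list \<Rightarrow> nat list" where
  "word_join b c = 0 # map Suc b @ c"

lemma catalan_word_conv_nth:
  "catalan_word a \<longleftrightarrow> (a \<noteq> [] \<longrightarrow> a ! 0 = 0) \<and> (\<forall>i. Suc i < length a \<longrightarrow> a ! Suc i \<le> Suc (a ! i))"
  unfolding catalan_word_def successively_conv_nth by (cases a) auto

lemma catalan_word_nth_le: "catalan_word a \<Longrightarrow> i < length a \<Longrightarrow> a ! i \<le> i"
  by (induction i) (auto simp: catalan_word_conv_nth)

lemma catalan_word_join: "catalan_word b \<Longrightarrow> catalan_word c \<Longrightarrow> catalan_word (word_join b c)"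
  unfolding catalan_word_def word_join_def
  by (auto simp: successively_Cons successively_append_iff successively_map hd_map last_map
      hd_append split: if_splits)

lemma word_join_eq_iff:
  assumes "catalan_word c" "catalan_word c'"
  shows "word_join b c = word_join b' c' \<longleftrightarrow> b = b' \<and> c = c'"
proof
  assume eq: "word_join b c = word_join b' c'"
  have "takeWhile (\<lambda>x. 0 < x) (map Suc b @ c) = map Suc b" if "catalan_word c" for b c
  proof -
    have "takeWhile (\<lambda>x. 0 < x) c = []"
      using that by (cases c) (auto simp: catalan_word_def)
    then show ?thesis
      by (subst takeWhile_append2) auto
  qed
  then have "map Suc b = map Suc b'"
    using eq assms unfolding word_join_def by (metis list.inject)
  then show "b = b' \<and> c = c'"
    using eq unfolding word_join_def by (simp add: inj_map_eq_map)
qed simp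

lemma catalan_word_decompose:
  assumes "catalan_word a" "a \<noteq> []"
  obtains b c where "catalan_word b" "catalan_word c" "a = word_join b c"
proof -
  obtain rest where a: "a = 0 # rest"
    using assms unfolding catalan_word_def by (cases a) auto
  define b where "b = map (\<lambda>x. x - 1) (takeWhile (\<lambda>x. 0 < x) rest)"
  define c where "c = dropWhile (\<lambda>x. 0 < x) rest"
  have pos: "\<forall>x\<in>set (takeWhile (\<lambda>x. 0 < x) rest). 0 < x"
    by (auto dest: set_takeWhileD)
  then have b: "map Suc b = takeWhile (\<lambda>x. 0 < x) rest"
    unfolding b_def by (simp add: map_idI)
  then have rest: "rest = map Suc b @ c"
    unfolding c_def by simp
  have succ: "successively (\<lambda>x y. y \<le> Suc x) (0 # map Suc b @ c)"
    using assms(1) unfolding a rest catalan_word_def by simp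
  have "catalan_word b"
    using succ unfolding catalan_word_def
    by (cases b) (auto simp: successively_Cons successively_append_iff successively_map hd_map)
  moreover have "c = [] \<or> hd c = 0"
    using hd_dropWhile[of "\<lambda>x. 0 < x" rest] unfolding c_def by (cases "c = []") (auto simp: c_def)
  then have "catalan_word c"
    using succ unfolding catalan_word_def by (auto simp: successively_Cons successively_append_iff)
  ultimately show thesis
    using that unfolding a rest word_join_def by blast
qed

lemma catalan_words_0: "catalan_words 0 = {[]}"
  by (auto simp: catalan_words_def catalan_word_def)

lemma finite_catalan_words: "finite (catalan_words n)"
proof (rule finite_subset)
  show "catalan_words n \<subseteq> {a. set a \<subseteq> {..<n} \<and> length a = n}"
    using catalan_word_nth_le by (fastforce simp: catalan_words_def in_set_conv_nth)
qed (simp add: finite_lists_length_eq)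

lemma catalan_words_Suc:
  "catalan_words (Suc n) = (\<lambda>(b, c). word_join b c) ` (\<Union>j\<le>n. catalan_words j \<times> catalan_words (n - j))"
proof (intro set_eqI iffI)
  fix a assume "a \<in> catalan_words (Suc n)"
  then have a: "catalan_word a" "a \<noteq> []" "length a = Suc n"
    by (auto simp: catalan_words_def)
  then obtain b c where "catalan_word b" "catalan_word c" "a = word_join b c"
    using catalan_word_decompose[OF a(1,2)] by blast
  moreover have "length b + length c = n"
    using a(3) unfolding \<open>a = word_join b c\<close> word_join_def by simp
  ultimately show "a \<in> (\<lambda>(b, c). word_join b c) ` (\<Union>j\<le>n. catalan_words j \<times> catalan_words (n - j))"
    by (force simp: catalan_words_def)
next
  fix a assume "a \<in> (\<lambda>(b, c). word_join b c) ` (\<Union>j\<le>n. catalan_words j \<times> catalan_words (n - j))"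
  then show "a \<in> catalan_words (Suc n)"
    by (auto simp: catalan_words_def catalan_word_join) (simp add: word_join_def)
qed

lemma sum_catalan_words_Suc:
  "(\<Sum>a\<in>catalan_words (Suc n). f a) = (\<Sum>j\<le>n. \<Sum>b\<in>catalan_words j. \<Sum>c\<in>catalan_words (n - j). f (word_join b c))"
proof -
  have "inj_on (\<lambda>(b, c). word_join b c) (\<Union>j\<le>n. catalan_words j \<times> catalan_words (n - j))"
    by (auto simp: inj_on_def catalan_words_def word_join_eq_iff)
  then have "(\<Sum>a\<in>catalan_words (Suc n). f a)
      = (\<Sum>(b, c)\<in>(\<Union>j\<le>n. catalan_words j \<times> catalan_words (n - j)). f (word_join b c))"
    unfolding catalan_words_Suc by (simp add: sum.reindex case_prod_beta')
  also have "\<dots> = (\<Sum>j\<le>n. \<Sum>(b, c)\<in>catalan_words j \<times> catalan_words (n - j). f (word_join b c))"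
    by (rule sum.UNION_disjoint) (auto simp: finite_catalan_words, auto simp: catalan_words_def)
  finally show ?thesis
    by (simp add: sum.cartesian_product)
qed

definition choose2_sum :: "nat list \<Rightarrow> nat" where
  "choose2_sum a = (\<Sum>x\<leftarrow>a. x choose 2)"

definition weighted_sum :: "nat list \<Rightarrow> nat" where
  "weighted_sum a = (\<Sum>i<length a. i * a ! i)"

lemma sum_list_map_Suc: "sum_list (map Suc b) = sum_list b + length b"
  by (induction b) auto

lemma sum_list_word_join: "sum_list (word_join b c) = sum_list b + length b + sum_list c"
  by (simp add: word_join_def sum_list_map_Suc)

lemma choose2_sum_word_join: "choose2_sum (word_join b c) = choose2_sum b + sum_list b + choose2_sum c"
proof -
  have "choose2_sum (map Suc b) = choose2_sum b + sum_list b"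
    by (induction b) (simp_all add: choose2_sum_def numeral_2_eq_2)
  then show ?thesis
    by (simp add: choose2_sum_def word_join_def)
qed

lemma weighted_sum_Nil [simp]: "weighted_sum [] = 0"
  by (simp add: weighted_sum_def)

lemma weighted_sum_Cons [simp]: "weighted_sum (x # xs) = weighted_sum xs + sum_list xs"
  by (simp add: weighted_sum_def sum.lessThan_Suc_shift sum.distrib sum_list_sum_nth
      atLeast0LessThan del: sum.lessThan_Suc)

lemma weighted_sum_append:
  "weighted_sum (xs @ ys) = weighted_sum xs + weighted_sum ys + length xs * sum_list ys"
  by (induction xs) auto

lemma weighted_sum_word_join:
  "weighted_sum (word_join b c)
    = weighted_sum b + sum_list b + (Suc (length b) choose 2) + weighted_sum c + Suc (length b) * sum_list c"
proof -
  have "weighted_sum (map Suc b) = weighted_sum b + (length b choose 2)"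
    by (induction b) (simp_all add: sum_list_map_Suc numeral_2_eq_2)
  then show ?thesis
    by (simp add: word_join_def weighted_sum_append sum_list_map_Suc numeral_2_eq_2)
qed

section \<open>The abacus of an \<open>(s, s + 1)\<close>-core\<close>

text \<open>On the \<open>s\<close>-abacus, \<open>abacus_set s a\<close> has the beads \<open>0, \<dots>, a ! r - 1\<close> on runner \<open>r\<close>.\<close>

definition abacus_set :: "nat \<Rightarrow> nat list \<Rightarrow> nat set" where
  "abacus_set s a = (\<Union>r<length a. (\<lambda>q. q * s + r) ` {..<a ! r})"

lemma mem_abacus_set_iff:
  assumes "length a = s" "0 < s"
  shows "x \<in> abacus_set s a \<longleftrightarrow> x div s < a ! (x mod s)"
proof
  assume "x \<in> abacus_set s a"
  then obtain q r where "r < s" "q < a ! r" "x = q * s + r"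
    unfolding abacus_set_def using assms by auto
  then show "x div s < a ! (x mod s)"
    by simp
next
  assume "x div s < a ! (x mod s)"
  moreover have "x mod s < length a" "x = x div s * s + x mod s"
    using assms by simp_all
  ultimately show "x \<in> abacus_set s a"
    unfolding abacus_set_def by blast
qed

lemma mult_add_mem_abacus_set_iff:
  "length a = s \<Longrightarrow> r < s \<Longrightarrow> q * s + r \<in> abacus_set s a \<longleftrightarrow> q < a ! r"
  using mem_abacus_set_iff[of a s "q * s + r"] by simp

lemma finite_abacus_set: "finite (abacus_set s a)"
  unfolding abacus_set_def by simp

lemma mult_add_mod_eq_imp_eq:
  fixes s q q' r r' :: nat
  assumes "q * s + r = q' * s + r'" "r < s" "r' < s"
  shows "r = r'"
  using arg_cong[OF assms(1), of "\<lambda>x. x mod s"] assms(2,3) by simp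

lemma card_abacus_set:
  assumes "length a = s" "0 < s"
  shows "card (abacus_set s a) = sum_list a"
proof -
  have "card (abacus_set s a) = (\<Sum>r<length a. card ((\<lambda>q. q * s + r) ` {..<a ! r}))"
    unfolding abacus_set_def using assms by (intro card_UN_disjoint) (auto dest: mult_add_mod_eq_imp_eq)
  also have "\<dots> = (\<Sum>r<length a. a ! r)"
    using assms by (simp add: card_image inj_on_def)
  finally show ?thesis
    by (simp add: sum_list_sum_nth atLeast0LessThan)
qed

lemma sum_abacus_set:
  assumes "length a = s" "0 < s"
  shows "\<Sum>(abacus_set s a) = s * choose2_sum a + weighted_sum a"
proof -
  have "\<Sum>(abacus_set s a) = (\<Sum>r<length a. \<Sum>((\<lambda>q. q * s + r) ` {..<a ! r}))"
    unfolding abacus_set_def using assms by (intro sum.UNION_disjoint) (auto dest: mult_add_mod_eq_imp_eq)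
  also have "\<dots> = (\<Sum>r<length a. \<Sum>q<a ! r. q * s + r)"
    using assms by (simp add: sum.reindex inj_on_def)
  also have "\<dots> = (\<Sum>r<length a. s * (a ! r choose 2) + r * a ! r)"
  proof (rule sum.cong)
    show "(\<Sum>q<n. q * s + r) = s * (n choose 2) + r * n" for n r
      by (simp add: sum.distrib sum_lessThan_eq_choose_two mult.commute flip: sum_distrib_right)
  qed simp
  also have "\<dots> = s * (\<Sum>r<length a. a ! r choose 2) + (\<Sum>r<length a. r * a ! r)"
    by (simp add: sum.distrib sum_distrib_left)
  finally show ?thesis
    by (simp add: choose2_sum_def weighted_sum_def sum_list_sum_nth atLeast0LessThan sum.distrib
        sum_distrib_left)
qed

lemma abacus_set_sub_closed:
  assumes a: "a \<in> catalan_words s" and s: "0 < s"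
  shows "0 \<notin> abacus_set s a" "sub_closed s (abacus_set s a)" "sub_closed (Suc s) (abacus_set s a)"
proof -
  have len: "length a = s" and a0: "a ! 0 = 0" and step: "\<And>r. Suc r < s \<Longrightarrow> a ! Suc r \<le> Suc (a ! r)"
    using a s by (auto simp: catalan_words_def catalan_word_conv_nth)
  have mem: "q * s + r \<in> abacus_set s a \<longleftrightarrow> q < a ! r" if "r < s" for q r
    using mult_add_mem_abacus_set_iff[OF len that] .
  have elem: "\<exists>q r. r < s \<and> q < a ! r \<and> x = q * s + r" if "x \<in> abacus_set s a" for x
    using that len unfolding abacus_set_def by blast
  show "0 \<notin> abacus_set s a"
    using mem[of 0 0] s a0 by simp
  show "sub_closed s (abacus_set s a)"
    unfolding sub_closed_def
  proof (intro ballI impI)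
    fix x assume x: "x \<in> abacus_set s a" "s \<le> x"
    then obtain q r where qr: "r < s" "q < a ! r" "x = q * s + r"
      using elem by blast
    then obtain q' where "q = Suc q'"
      using x(2) by (cases q) auto
    then show "x - s \<in> abacus_set s a"
      using mem qr by simp
  qed
  show "sub_closed (Suc s) (abacus_set s a)"
    unfolding sub_closed_def
  proof (intro ballI impI)
    fix x assume x: "x \<in> abacus_set s a" "Suc s \<le> x"
    then obtain q r where qr: "r < s" "q < a ! r" "x = q * s + r"
      using elem by blast
    then obtain q' where q: "q = Suc q'"
      using x(2) by (cases q) auto
    obtain r' where r: "r = Suc r'"
      using qr a0 by (cases r) auto
    show "x - Suc s \<in> abacus_set s a"
      using mem[of r' q'] step[of r'] qr unfolding q r by simp
  qed
qed

lemma sub_closed_mult: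
  assumes "sub_closed t H"
  shows "x + k * t \<in> H \<Longrightarrow> x \<in> H"
proof (induction k)
  case (Suc k)
  then have "x + k * t + t \<in> H"
    by (simp add: algebra_simps)
  then have "x + k * t + t - t \<in> H"
    using assms unfolding sub_closed_def by (meson le_add2)
  then show ?case
    using Suc.IH by simp
qed simp

lemma down_closed_eq_lessThan:
  fixes A :: "nat set"
  assumes "finite A" "\<And>q q'. q \<in> A \<Longrightarrow> q' \<le> q \<Longrightarrow> q' \<in> A"
  shows "A = {..<card A}"
proof (cases "A = {}")
  case False
  define m where "m = Max A"
  have "A \<subseteq> {..m}"
    using Max_ge[OF assms(1)] unfolding m_def by blast
  moreover have "{..m} \<subseteq> A"
    using assms(2)[OF Max_in[OF assms(1) False]] unfolding m_def by blast
  ultimately have "A = {..m}"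
    by blast
  then show ?thesis
    by (simp add: lessThan_Suc_atMost)
qed simp

lemma sub_closed_runner_eq_lessThan:
  assumes fin: "finite H" and closed: "sub_closed s H" and r: "r < s"
  shows "{q. q * s + r \<in> H} = {..<card {q. q * s + r \<in> H}}"
proof (rule down_closed_eq_lessThan)
  have "{q. q * s + r \<in> H} \<subseteq> (\<lambda>x. x div s) ` H"
  proof
    fix q assume "q \<in> {q. q * s + r \<in> H}"
    moreover have "(q * s + r) div s = q"
      using r by simp
    ultimately show "q \<in> (\<lambda>x. x div s) ` H"
      by (metis image_eqI mem_Collect_eq)
  qed
  then show "finite {q. q * s + r \<in> H}"
    using fin finite_surj by blast
  show "q' \<in> {q. q * s + r \<in> H}" if "q \<in> {q. q * s + r \<in> H}" "q' \<le> q" for q q'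
  proof -
    obtain d where "q = q' + d"
      using \<open>q' \<le> q\<close> le_iff_add by blast
    then have "q' * s + r + d * s \<in> H"
      using \<open>q \<in> {q. q * s + r \<in> H}\<close> by (simp add: algebra_simps)
    then show ?thesis
      using sub_closed_mult[OF closed] by blast
  qed
qed

lemma sub_closed_abacus_set:
  assumes s: "0 < s" and fin: "finite H" and H0: "0 \<notin> H"
    and closed: "sub_closed s H" "sub_closed (Suc s) H"
  obtains a where "a \<in> catalan_words s" "abacus_set s a = H"
proof -
  define a where "a = map (\<lambda>r. card {q. q * s + r \<in> H}) [0..<s]"
  have len: "length a = s"
    unfolding a_def by simp
  have mem: "q * s + r \<in> H \<longleftrightarrow> q < a ! r" if "r < s" for q r
    using sub_closed_runner_eq_lessThan[OF fin closed(1) that] that unfolding a_def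
    by (metis (no_types, lifting) add_0 diff_zero lessThan_iff mem_Collect_eq nth_map_upt)
  have "a ! 0 = 0"
    using mem[of 0 0] s H0 by auto
  moreover have "a ! Suc r \<le> Suc (a ! r)" if "Suc r < s" for r
  proof (rule ccontr)
    assume "\<not> ?thesis"
    then have "Suc (a ! r) * s + Suc r \<in> H"
      using mem[OF that, of "Suc (a ! r)"] by linarith
    moreover have "Suc (a ! r) * s + Suc r = a ! r * s + r + 1 * Suc s"
      by simp
    ultimately have "a ! r * s + r \<in> H"
      using sub_closed_mult[OF closed(2)] by metis
    then show False
      using mem[of r "a ! r"] that by simp
  qed
  ultimately have "a \<in> catalan_words s"
    using len s by (auto simp: catalan_words_def catalan_word_conv_nth)
  moreover have "abacus_set s a = H"
  proof (intro set_eqI)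
    fix x
    have "x \<in> abacus_set s a \<longleftrightarrow> x div s * s + x mod s \<in> H"
      using mem_abacus_set_iff[OF len s] mem[of "x mod s" "x div s"] s by simp
    then show "x \<in> abacus_set s a \<longleftrightarrow> x \<in> H"
      by simp
  qed
  ultimately show thesis
    using that by blast
qed

lemma bij_betw_abacus_set:
  assumes "0 < s"
  shows "bij_betw (abacus_set s) (catalan_words s) {H. finite H \<and> 0 \<notin> H \<and> sub_closed s H \<and> sub_closed (Suc s) H}"
  unfolding bij_betw_def
proof (intro conjI set_eqI iffI)
  show "inj_on (abacus_set s) (catalan_words s)"
  proof (rule inj_onI)
    fix a b assume ab: "a \<in> catalan_words s" "b \<in> catalan_words s" "abacus_set s a = abacus_set s b"
    then have len: "length a = s" "length b = s"
      by (simp_all add: catalan_words_def)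
    have "a ! r = b ! r" if "r < s" for r
    proof -
      have iff: "q < a ! r \<longleftrightarrow> q < b ! r" for q
        using mult_add_mem_abacus_set_iff[OF len(1) that] mult_add_mem_abacus_set_iff[OF len(2) that] ab(3) by simp
      show ?thesis
        using iff[of "a ! r"] iff[of "b ! r"] by linarith
    qed
    then show "a = b"
      using len by (simp add: nth_equalityI)
  qed
next
  fix H assume "H \<in> abacus_set s ` catalan_words s"
  then obtain a where "a \<in> catalan_words s" "H = abacus_set s a"
    by blast
  then show "H \<in> {H. finite H \<and> 0 \<notin> H \<and> sub_closed s H \<and> sub_closed (Suc s) H}"
    using abacus_set_sub_closed[OF _ assms] finite_abacus_set by simp
next
  fix H assume "H \<in> {H. finite H \<and> 0 \<notin> H \<and> sub_closed s H \<and> sub_closed (Suc s) H}"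
  then obtain a where "a \<in> catalan_words s" "abacus_set s a = H"
    using sub_closed_abacus_set[OF assms] by blast
  then show "H \<in> abacus_set s ` catalan_words s"
    by blast
qed

section \<open>The Catalan series and its moment series\<close>

definition fps_theta :: "'a::comm_ring_1 fps \<Rightarrow> 'a fps" where
  "fps_theta f = fps_X * fps_deriv f"

lemma fps_theta_nth [simp]: "fps_nth (fps_theta f) n = of_nat n * fps_nth f n"
  by (cases n) (simp_all add: fps_theta_def)

lemma fps_theta_add [simp]: "fps_theta (f + g) = fps_theta f + fps_theta g"
  and fps_theta_diff [simp]: "fps_theta (f - g) = fps_theta f - fps_theta g"
  and fps_theta_mult [simp]: "fps_theta (f * g) = fps_theta f * g + f * fps_theta g"
  and fps_theta_one [simp]: "fps_theta 1 = 0"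
  and fps_theta_numeral [simp]: "fps_theta (numeral k) = 0"
  and fps_theta_X [simp]: "fps_theta fps_X = fps_X"
  by (simp_all add: fps_theta_def algebra_simps)

lemma fps_theta_power_mult: "fps_theta (P ^ k) * P = of_nat k * P ^ k * fps_theta P"
  by (induction k) (simp_all add: algebra_simps)

lemma fps_theta_quotient_power:
  assumes "F * P ^ k = G"
  shows "fps_theta F * P ^ Suc k = P * fps_theta G - of_nat k * G * fps_theta P"
proof -
  have "fps_theta G * P = fps_theta F * P ^ Suc k + F * (fps_theta (P ^ k) * P)"
    using assms by (auto simp: algebra_simps)
  also have "F * (fps_theta (P ^ k) * P) = of_nat k * (F * P ^ k) * fps_theta P"
    unfolding fps_theta_power_mult by (simp only: ac_simps)
  finally show ?thesis
    using assms by (simp add: algebra_simps)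
qed

lemma central_binomial_step:
  "Suc n * ((2 * Suc n) choose Suc n) = 2 * (2 * n + 1) * ((2 * n) choose n)"
proof -
  have up: "Suc n * ((2 * Suc n) choose Suc n) = Suc (Suc (2 * n)) * (Suc (2 * n) choose n)"
    using Suc_times_binomial[of n "Suc (2 * n)"] by simp
  have mid: "Suc n * (Suc (2 * n) choose n) = Suc (2 * n) * ((2 * n) choose n)"
    using Suc_times_binomial_add[of n n] Suc_times_binomial[of n "2 * n"] by (simp add: mult_2)
  have "Suc n * (Suc n * ((2 * Suc n) choose Suc n)) = Suc (Suc (2 * n)) * (Suc n * (Suc (2 * n) choose n))"
    unfolding up by (simp only: mult.left_commute)
  also have "\<dots> = Suc n * (2 * (2 * n + 1) * ((2 * n) choose n))"
    unfolding mid by simp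
  finally show ?thesis
    by (metis mult_left_cancel nat.distinct(1))
qed

text \<open>All series below are rational functions of the Catalan series \<open>C\<close> with powers of \<open>2 - C\<close>
  as denominators.\<close>

locale catalan_series =
  fixes C :: "real fps"
  assumes catalan_eq: "C = 1 + fps_X * C * C"
begin

lemma C_nth_0: "fps_nth C 0 = 1"
  by (subst catalan_eq) simp

lemma C_nonzero: "C \<noteq> 0"
  using C_nth_0 by auto

lemma two_minus_C_nonzero: "2 - C \<noteq> 0"
proof
  assume "2 - C = 0"
  then have "fps_nth (2 - C) 0 = 0" by simp
  then show False by (simp add: C_nth_0 fps_numeral_nth)
qed

lemma theta_C: "fps_theta C * (2 - C) = C * (C - 1)"
proof -
  have "fps_theta C = fps_theta (1 + fps_X * C * C)"
    using catalan_eq by simp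
  then have "fps_theta C = fps_X * C * C + 2 * fps_X * C * fps_theta C"
    by (simp add: algebra_simps)
  then show ?thesis
    using catalan_eq by algebra
qed

lemma theta_quotient:
  assumes "F * (2 - C) ^ k = G"
  shows "fps_theta F * (2 - C) ^ (k + 2) = (2 - C)^2 * fps_theta G + of_nat k * G * C * (C - 1)"
proof -
  have "fps_theta F * (2 - C) ^ (k + 2) = (fps_theta F * (2 - C) ^ Suc k) * (2 - C)"
    by (simp add: algebra_simps)
  also have "\<dots> = ((2 - C) * fps_theta G + of_nat k * G * fps_theta C) * (2 - C)"
    using fps_theta_quotient_power[OF assms] by simp
  also have "\<dots> = (2 - C)^2 * fps_theta G + of_nat k * G * (fps_theta C * (2 - C))"
    by (simp add: algebra_simps power2_eq_square)
  finally show ?thesis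
    by (simp add: theta_C mult.assoc)
qed

lemma theta_theta_C:
  "fps_theta (fps_theta C) * (2 - C) ^ 3 = C * (C - 1) * (C * (C - 1) + (2 * C - 1) * (2 - C))"
  using theta_quotient[of "fps_theta C" 1 "C * (C - 1)"] theta_C by (simp add: algebra_simps) algebra

lemma linear_recurrence:
  assumes "F = fps_X * (F * C + C * F + R)"
  shows "F * C * (2 - C) = (C - 1) * R"
  using assms catalan_eq by algebra

lemma central_binomial_series:
  "Abs_fps (\<lambda>n. real ((2 * n) choose n)) * (2 - C) = C"
proof -
  define Z where "Z = C * inverse (2 - C)"
  have Z_eq: "Z * (2 - C) = C"
    unfolding Z_def by (simp add: inverse_mult_eq_1 C_nth_0 fps_numeral_nth mult.assoc)
  have "fps_theta Z * (2 - C) ^ 3 = (2 - C)^2 * fps_theta C + C * C * (C - 1)"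
    using theta_quotient[of Z 1 C] Z_eq by (simp add: power3_eq_cube mult.assoc)
  then have "C * C * (2 - C) * ((1 - 4 * fps_X) * fps_theta Z - 2 * fps_X * Z) = 0"
    using Z_eq catalan_eq theta_C by algebra
  then have ode: "(1 - 4 * fps_X) * fps_theta Z = 2 * fps_X * Z"
    \<comment> \<open>the differential equation of \<open>1 / \<surd>(1 - 4x)\<close>\<close>
    using C_nonzero two_minus_C_nonzero by simp
  have "fps_nth Z 0 = 1"
    using arg_cong[OF Z_eq, of "\<lambda>f. fps_nth f 0"] by (simp add: C_nth_0 fps_numeral_nth)
  moreover have "real (Suc n) * fps_nth Z (Suc n) = (4 * real n + 2) * fps_nth Z n" for n
    using arg_cong[OF ode, of "\<lambda>f. fps_nth f (Suc n)"]
    by (simp add: algebra_simps fps_numeral_fps_const del: of_nat_Suc)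
  moreover have "real (Suc n) * real ((2 * Suc n) choose Suc n) = (4 * real n + 2) * real ((2 * n) choose n)" for n
    using arg_cong[OF central_binomial_step[of n], of real] by (simp add: algebra_simps del: binomial_Suc_Suc)
  ultimately have "fps_nth Z n = real ((2 * n) choose n)" for n
  proof (induction n)
    case (Suc n)
    then have "real (Suc n) * fps_nth Z (Suc n) = real (Suc n) * real ((2 * Suc n) choose Suc n)"
      by metis
    then show ?case
      by (simp del: of_nat_Suc)
  qed simp
  then have "Abs_fps (\<lambda>n. real ((2 * n) choose n)) = Z"
    by (simp add: fps_eq_iff)
  with Z_eq show ?thesis
    by simp
qed

end

text \<open>\<open>T1\<close>, \<open>T2\<close>, \<open>A\<close>, \<open>B\<close> stand for the generating functions of \<open>sum_list\<close>, its square,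
  \<open>choose2_sum\<close> and \<open>weighted_sum\<close> over Catalan words; their equations come from the first-return
  decomposition.\<close>

locale catalan_moments = catalan_series +
  fixes T1 T2 A B :: "real fps"
  assumes T1_eq: "T1 = fps_X * (T1 * C + C * T1 + fps_theta C * C)"
    and T2_eq: "T2 = fps_X * (T2 * C + C * T2 + (C * (fps_theta (fps_theta C) + 2 * fps_theta T1)
                   + 2 * T1 * (T1 + fps_theta C)))"
    and A_eq: "A = fps_X * (A * C + C * A + T1 * C)"
    and B_eq: "2 * B = fps_X * (2 * B * C + C * (2 * B)
                   + (C * (4 * T1 + fps_theta (fps_theta C) + fps_theta C) + 2 * fps_theta C * T1))"
begin

lemma T1_closed: "T1 * (2 - C) ^ 2 = C * (C - 1) ^ 2"
proof -
  have "C * (T1 * (2 - C) ^ 2 - C * (C - 1) ^ 2) = 0"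
    using linear_recurrence[OF T1_eq] theta_C by algebra
  then show ?thesis
    using C_nonzero by simp
qed

lemma theta_T1_closed:
  "fps_theta T1 * (2 - C) ^ 4 = C * (C - 1) ^ 2 * (2 * C * (C - 1) + (3 * C - 1) * (2 - C))"
  using theta_quotient[OF T1_closed] theta_C by (simp add: power2_eq_square power3_eq_cube) algebra

lemma A_closed: "A * (2 - C) ^ 3 = C * (C - 1) ^ 3"
proof -
  have "C * (A * (2 - C) ^ 3 - C * (C - 1) ^ 3) = 0"
    using linear_recurrence[OF A_eq] T1_closed by algebra
  then show ?thesis
    using C_nonzero by simp
qed

lemma theta_A_closed:
  "fps_theta A * (2 - C) ^ 5 = C * (C - 1) ^ 3 * (3 * C * (C - 1) + (4 * C - 1) * (2 - C))"
  using theta_quotient[OF A_closed] theta_C by (simp add: power2_eq_square power3_eq_cube) algebra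

lemma T2_closed: "T2 * (2 - C) ^ 5 = C * (C - 1) ^ 2 * (8 * C ^ 2 - C ^ 3 - 8 * C + 2)"
proof -
  let ?P = "2 - C"
  have "C * (T2 * ?P ^ 5) = (C - 1) * (C * (?P * (fps_theta (fps_theta C) * ?P ^ 3)
      + 2 * (fps_theta T1 * ?P ^ 4)) + 2 * (T1 * ?P ^ 2) * (T1 * ?P ^ 2 + ?P * (fps_theta C * ?P)))"
    using linear_recurrence[OF T2_eq] by algebra
  also have "\<dots> = C * (C * (C - 1) ^ 2 * (8 * C ^ 2 - C ^ 3 - 8 * C + 2))"
    unfolding theta_C theta_theta_C T1_closed theta_T1_closed by algebra
  finally show ?thesis
    using C_nonzero by simp
qed

lemma B_closed: "B * (2 - C) ^ 4 = C * (C - 1) ^ 2 * (4 * C - C ^ 2 - 2)"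
proof -
  let ?P = "2 - C"
  have "2 * C * (B * ?P ^ 4) = (C - 1) * (C * (4 * ?P * (T1 * ?P ^ 2)
      + fps_theta (fps_theta C) * ?P ^ 3 + ?P ^ 2 * (fps_theta C * ?P))
      + 2 * (fps_theta C * ?P) * (T1 * ?P ^ 2))"
    using linear_recurrence[OF B_eq] by algebra
  also have "\<dots> = 2 * C * (C * (C - 1) ^ 2 * (4 * C - C ^ 2 - 2))"
    unfolding theta_C theta_theta_C T1_closed by algebra
  finally show ?thesis
    using C_nonzero by simp
qed

lemma moment_identity:
  defines "Z \<equiv> Abs_fps (\<lambda>n. real ((2 * n) choose n))"
  shows "12 * (fps_theta A + B) - 6 * (T2 - T1) = fps_theta (fps_theta Z) - fps_theta Z"
proof -
  let ?P = "2 - C"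
  have Z_eq: "Z * ?P ^ 1 = C"
    unfolding Z_def using central_binomial_series by simp
  have theta_Z: "fps_theta Z * ?P ^ 3 = 2 * C * (C - 1)"
    using theta_quotient[OF Z_eq] theta_C by (simp add: power2_eq_square power3_eq_cube) algebra
  have theta_theta_Z:
    "fps_theta (fps_theta Z) * ?P ^ 5 = 2 * C * (C - 1) * (3 * C * (C - 1) + (2 * C - 1) * ?P)"
    using theta_quotient[OF theta_Z] theta_C by (simp add: power2_eq_square power3_eq_cube) algebra
  have "?P ^ 5 * (12 * (fps_theta A + B) - 6 * (T2 - T1) - (fps_theta (fps_theta Z) - fps_theta Z))
      = 12 * (fps_theta A * ?P ^ 5) + 12 * ?P * (B * ?P ^ 4) - 6 * (T2 * ?P ^ 5)
        + 6 * ?P ^ 3 * (T1 * ?P ^ 2) - fps_theta (fps_theta Z) * ?P ^ 5 + ?P ^ 2 * (fps_theta Z * ?P ^ 3)"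
    by algebra
  also have "\<dots> = 0"
    unfolding theta_A_closed B_closed T2_closed T1_closed theta_Z theta_theta_Z by algebra
  finally show ?thesis
    using two_minus_C_nonzero by simp
qed

end

section \<open>Generating functions of statistics of Catalan words\<close>

lemma real_choose_two: "real (n choose 2) = real n * (real n - 1) / 2"
  by (induction n) (simp_all add: numeral_2_eq_2 field_simps)

definition word_gf :: "(nat list \<Rightarrow> real) \<Rightarrow> real fps" where
  "word_gf f = Abs_fps (\<lambda>n. \<Sum>a\<in>catalan_words n. f a)"

lemma word_gf_nth_0 [simp]: "fps_nth (word_gf f) 0 = f []"
  by (simp add: word_gf_def catalan_words_0)

lemma word_gf_nth_Suc:
  "fps_nth (word_gf f) (Suc n) = (\<Sum>j\<le>n. \<Sum>b\<in>catalan_words j. \<Sum>c\<in>catalan_words (n - j). f (word_join b c))"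
  by (simp add: word_gf_def sum_catalan_words_Suc)

lemma word_gf_mult_nth:
  "fps_nth (word_gf u * word_gf v) n = (\<Sum>j\<le>n. \<Sum>b\<in>catalan_words j. \<Sum>c\<in>catalan_words (n - j). u b * v c)"
  by (simp add: word_gf_def fps_mult_nth atLeast0AtMost sum_product)

lemma fps_theta_word_gf: "fps_theta (word_gf f) = word_gf (\<lambda>a. real (length a) * f a)"
  by (rule fps_ext) (simp add: word_gf_def catalan_words_def sum_distrib_left)

lemma word_gf_mult_const: "word_gf (\<lambda>a. c * f a) = fps_const c * word_gf f"
  by (rule fps_ext) (simp add: word_gf_def sum_distrib_left)

lemma word_gf_eq_fps_X_mult:
  assumes "f [] = 0"
    and "\<And>b c. f (word_join b c) = g b c"
    and "\<And>n. (\<Sum>j\<le>n. \<Sum>b\<in>catalan_words j. \<Sum>c\<in>catalan_words (n - j). g b c) = fps_nth G n"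
  shows "word_gf f = fps_X * G"
proof (rule fps_ext)
  fix n show "fps_nth (word_gf f) n = fps_nth (fps_X * G) n"
    using assms by (cases n) (simp_all add: word_gf_nth_Suc)
qed

abbreviation "count_gf \<equiv> word_gf (\<lambda>_. 1)"
abbreviation "sum_gf \<equiv> word_gf (\<lambda>a. real (sum_list a))"
abbreviation "sum_sq_gf \<equiv> word_gf (\<lambda>a. real (sum_list a) ^ 2)"
abbreviation "choose2_sum_gf \<equiv> word_gf (\<lambda>a. real (choose2_sum a))"
abbreviation "weighted_sum_gf \<equiv> word_gf (\<lambda>a. real (weighted_sum a))"

lemma count_gf_eq: "count_gf = 1 + fps_X * count_gf * count_gf"
proof (rule fps_ext)
  fix n show "fps_nth count_gf n = fps_nth (1 + fps_X * count_gf * count_gf) n"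
    by (cases n) (simp_all add: word_gf_nth_Suc word_gf_mult_nth mult.assoc)
qed

text \<open>In the next proofs, a summand \<open>u b * v c\<close> of a join formula contributes
  \<open>word_gf u * word_gf v\<close>; the factors \<open>1\<close> make this shape explicit.\<close>

lemma sum_gf_eq: "sum_gf = fps_X * (sum_gf * count_gf + count_gf * sum_gf + fps_theta count_gf * count_gf)"
proof (rule word_gf_eq_fps_X_mult)
  show "real (sum_list (word_join b c)) = real (sum_list b) * 1 + 1 * real (sum_list c)
      + real (length b) * 1 * 1" for b c
    by (simp add: sum_list_word_join)
qed (simp_all only: fps_add_nth word_gf_mult_nth fps_theta_word_gf sum.distrib, simp)

lemma sum_sq_gf_eq:
  "sum_sq_gf = fps_X * (sum_sq_gf * count_gf + count_gf * sum_sq_gf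
     + (count_gf * (fps_theta (fps_theta count_gf) + 2 * fps_theta sum_gf)
     + 2 * sum_gf * (sum_gf + fps_theta count_gf)))"
proof -
  have "sum_sq_gf = fps_X * (sum_sq_gf * count_gf + count_gf * sum_sq_gf
      + fps_theta (fps_theta count_gf) * count_gf + fps_theta sum_gf * count_gf
      + fps_theta sum_gf * count_gf + sum_gf * sum_gf + sum_gf * sum_gf
      + fps_theta count_gf * sum_gf + fps_theta count_gf * sum_gf)"
  proof (rule word_gf_eq_fps_X_mult)
    show "real (sum_list (word_join b c)) ^ 2 = real (sum_list b) ^ 2 * 1 + 1 * real (sum_list c) ^ 2
        + real (length b) * (real (length b) * 1) * 1
        + real (length b) * real (sum_list b) * 1 + real (length b) * real (sum_list b) * 1
        + real (sum_list b) * real (sum_list c) + real (sum_list b) * real (sum_list c)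
        + real (length b) * 1 * real (sum_list c) + real (length b) * 1 * real (sum_list c)" for b c
      by (simp add: sum_list_word_join power2_eq_square algebra_simps)
  qed (simp_all only: fps_add_nth word_gf_mult_nth fps_theta_word_gf sum.distrib, simp)
  then show ?thesis
    by algebra
qed

lemma choose2_sum_gf_eq:
  "choose2_sum_gf = fps_X * (choose2_sum_gf * count_gf + count_gf * choose2_sum_gf + sum_gf * count_gf)"
proof (rule word_gf_eq_fps_X_mult)
  show "real (choose2_sum (word_join b c)) = real (choose2_sum b) * 1 + 1 * real (choose2_sum c)
      + real (sum_list b) * 1" for b c
    by (simp add: choose2_sum_word_join)
qed (simp_all only: fps_add_nth word_gf_mult_nth sum.distrib, simp add: choose2_sum_def)

lemma weighted_sum_gf_eq:
  "2 * weighted_sum_gf = fps_X * (2 * weighted_sum_gf * count_gf + count_gf * (2 * weighted_sum_gf)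
     + (count_gf * (4 * sum_gf + fps_theta (fps_theta count_gf) + fps_theta count_gf)
     + 2 * fps_theta count_gf * sum_gf))"
proof -
  have "word_gf (\<lambda>a. 2 * real (weighted_sum a)) = fps_X * (weighted_sum_gf * count_gf
      + weighted_sum_gf * count_gf + count_gf * weighted_sum_gf + count_gf * weighted_sum_gf
      + sum_gf * count_gf + sum_gf * count_gf + fps_theta (fps_theta count_gf) * count_gf
      + fps_theta count_gf * count_gf + fps_theta count_gf * sum_gf + fps_theta count_gf * sum_gf
      + count_gf * sum_gf + count_gf * sum_gf)"
  proof (rule word_gf_eq_fps_X_mult)
    show "2 * real (weighted_sum (word_join b c)) = real (weighted_sum b) * 1 + real (weighted_sum b) * 1
        + 1 * real (weighted_sum c) + 1 * real (weighted_sum c) + real (sum_list b) * 1 + real (sum_list b) * 1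
        + real (length b) * (real (length b) * 1) * 1 + real (length b) * 1 * 1
        + real (length b) * 1 * real (sum_list c) + real (length b) * 1 * real (sum_list c)
        + 1 * real (sum_list c) + 1 * real (sum_list c)" for b c
      by (simp add: weighted_sum_word_join real_choose_two algebra_simps)
  qed (simp_all only: fps_add_nth word_gf_mult_nth fps_theta_word_gf sum.distrib, simp)
  then show ?thesis
    unfolding word_gf_mult_const fps_numeral_fps_const[symmetric] by algebra
qed

lemma catalan_moments_word_gf: "catalan_moments count_gf sum_gf sum_sq_gf choose2_sum_gf weighted_sum_gf"
  by unfold_locales (fact count_gf_eq sum_gf_eq sum_sq_gf_eq choose2_sum_gf_eq weighted_sum_gf_eq)+

lemma sum_core_size_catalan_words:
  "(\<Sum>a\<in>catalan_words n. real (n * choose2_sum a + weighted_sum a) - real (sum_list a choose 2))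
    = real n * (real n - 1) / 12 * real ((2 * n) choose n)"
proof -
  interpret catalan_moments count_gf sum_gf sum_sq_gf choose2_sum_gf weighted_sum_gf
    by (rule catalan_moments_word_gf)
  let ?W = "catalan_words n"
  have "12 * (real n * (\<Sum>a\<in>?W. real (choose2_sum a)) + (\<Sum>a\<in>?W. real (weighted_sum a)))
      - 6 * ((\<Sum>a\<in>?W. real (sum_list a) ^ 2) - (\<Sum>a\<in>?W. real (sum_list a)))
    = (real n * real n - real n) * real ((2 * n) choose n)"
    using arg_cong[OF moment_identity, of "\<lambda>F. fps_nth F n"]
    by (simp add: word_gf_def fps_numeral_fps_const algebra_simps)
  moreover have "(\<Sum>a\<in>?W. real (n * choose2_sum a + weighted_sum a) - real (sum_list a choose 2))
      = real n * (\<Sum>a\<in>?W. real (choose2_sum a)) + (\<Sum>a\<in>?W. real (weighted_sum a))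
        - ((\<Sum>a\<in>?W. real (sum_list a) ^ 2) - (\<Sum>a\<in>?W. real (sum_list a))) / 2"
    by (simp add: real_choose_two sum_subtractf sum.distrib sum_distrib_left power2_eq_square
        algebra_simps flip: sum_divide_distrib)
  ultimately show ?thesis
    by (simp add: field_simps)
qed

theorem theorem2p3:
  fixes s :: nat
  assumes "s \<ge> 1"
  shows "finite {la. is_partition la \<and> is_core s la \<and> is_core (s + 1) la} \<and>
         real (\<Sum>la\<in>{la. is_partition la \<and> is_core s la \<and> is_core (s + 1) la}. psize la)
           = real s * (real s - 1) / 12 * real ((2 * s) choose s)"
proof -
  let ?Cores = "{la. is_partition la \<and> is_core s la \<and> is_core (s + 1) la}"
  let ?Closed = "{H. finite H \<and> 0 \<notin> H \<and> sub_closed s H \<and> sub_closed (Suc s) H}"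
  have s: "0 < s"
    using assms by simp
  have cores: "bij_betw beta_set ?Cores ?Closed" and words: "bij_betw (abacus_set s) (catalan_words s) ?Closed"
    using bij_betw_beta_set_cores[OF s] bij_betw_abacus_set[OF s] .
  have "real (\<Sum>la\<in>?Cores. psize la) = (\<Sum>la\<in>?Cores. real (\<Sum>(beta_set la)) - real (card (beta_set la) choose 2))"
    by (simp add: psize_eq_beta_set)
  also have "\<dots> = (\<Sum>H\<in>?Closed. real (\<Sum>H) - real (card H choose 2))"
    by (rule sum.reindex_bij_betw[OF cores])
  also have "\<dots> = (\<Sum>a\<in>catalan_words s. real (\<Sum>(abacus_set s a)) - real (card (abacus_set s a) choose 2))"
    by (rule sum.reindex_bij_betw[OF words, symmetric])
  also have "\<dots> = (\<Sum>a\<in>catalan_words s. real (s * choose2_sum a + weighted_sum a) - real (sum_list a choose 2))"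
    using s by (intro sum.cong) (simp_all add: card_abacus_set sum_abacus_set catalan_words_def)
  also have "\<dots> = real s * (real s - 1) / 12 * real ((2 * s) choose s)"
    by (rule sum_core_size_catalan_words)
  finally show ?thesis
    using bij_betw_finite[OF cores] bij_betw_finite[OF words] finite_catalan_words by simp
qed

end
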